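(* Let $\delta\in(0,1)$, $R_V\ge1$ and $R_B\ge0$. (1) For any fixed $x\in\mathbb{R}^d$, with probability at least $1-3\delta$, for all $V,B\in\mathbb{R}^{m\times d}$ with $\|V-W_0\|\le R_V$ and $\|B-W_0\|\le R_B$, \[ |\langle\nabla f(x;V)-\nabla f(x;W_0),B\rangle|\le\frac{3\rho\|x\|(R_B+2R_V)R_V^{1/3}\ln(e/\delta)^{1/4}}{m^{1/6}}. \] (2) Let $\tau_1:=\frac{3\rho(R_B+2R_V)R_V^{1/3}\ln(e/\delta)^{1/4}}{m^{1/6}}$. With probability at least $1-3n\delta$, \[ \sup_{\|V_1-W_0\|\le R_V}\ \sup_{\|V_2-W_0\|\le R_V}\ \sup_{\|B-W_0\|\le R_B}\frac{\widehat{\mathcal R}_{V_1}(B)}{\widehat{\mathcal R}_{V_2}(B)}\le e^{2\tau_1}. \] (3) Suppose $m\ge\ln(edm)$. With probability at least $1-(1+3(d^2m)^d)\delta$, \[ \sup_{\|V-W_0\|\le R_V}\ \sup_{\|x\|\le1}|\langle\nabla f(x;V)-\nabla f(x;W_0),V\rangle|\le\frac{25\rho R_V^{4/3}\sqrt{\ln(edm/\delta)}}{m^{1/6}}=:\tau_3. \] (4) Suppose $m\ge\ln(edm)$. With probability at least $1-(1+3(d^2m)^d)\delta$, \[ \sup_{\|V-W_0\|\le R_V}\frac{\mathcal R(V)}{\mathcal R^{(0)}(V)}\le e^{\tau_3}. \]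
   Context: Data: $\mu$ a Borel probability measure on $\mathbb{R}^d\times\{-1,+1\}$ with $\|x\|\le1$ a.s.; sample $((x_k,y_k))_{k=1}^n$ (with $\|x_k\|\le1$). $\ell(r)=\ln(1+e^{-r})$. Network: width $m$, temperature $\rho>0$, $a_j$ i.i.d. uniform $\pm1$, $W_0\in\mathbb{R}^{m\times d}$ with i.i.d. $\mathcal N(0,1)$ entries, independent of $a$ and the sample. For $W$ with rows $w_j^\top$: $f(x;W)=\frac{\rho}{\sqrt m}\sum_ja_j\max\{0,w_j^\top x\}$, $\nabla f(x;W)=\frac{\rho}{\sqrt m}\sum_ja_j\mathbf 1[w_j^\top x\ge0]e_jx^\top$. For matrices $V,B$: $\widehat{\mathcal R}_V(B):=\frac1n\sum_k\ell(y_k\langle\nabla f(x_k;V),B\rangle)$ (the empirical risk of $B$ using the features at $V$); $\mathcal R(V)=\mathbb E\,\ell(Yf(X;V))$; $\mathcal R^{(0)}(V)=\mathbb E\,\ell(Y\langle\nabla f(X;W_0),V\rangle)$. $\langle A,B\rangle=\mathrm{tr}(A^\top B)$, $\|\cdot\|$ Frobenius norm. Probabilities over $a$, $W_0$ (and sample). *)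

theory Defs
  imports "HOL-Probability.Probability"
begin

text \<open>Vectors x in R^d are elements of real^'d (d = CARD('d)).  Matrices in R^(m x d)
  are functions (nat \<times> 'd) \<Rightarrow> real; only entries with row index j < m matter.\<close>

definition frob_inner :: "nat \<Rightarrow> (nat \<times> 'd::finite \<Rightarrow> real) \<Rightarrow> (nat \<times> 'd \<Rightarrow> real) \<Rightarrow> real" where
  "frob_inner m A B = (\<Sum>j<m. \<Sum>i\<in>UNIV. A (j, i) * B (j, i))"

definition frob_norm :: "nat \<Rightarrow> (nat \<times> 'd::finite \<Rightarrow> real) \<Rightarrow> real" where
  "frob_norm m A = sqrt (frob_inner m A A)"

definition mat_diff :: "(nat \<times> 'd::finite \<Rightarrow> real) \<Rightarrow> (nat \<times> 'd \<Rightarrow> real) \<Rightarrow> (nat \<times> 'd \<Rightarrow> real)" where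
  "mat_diff A B = (\<lambda>p. A p - B p)"

definition row_dot :: "(nat \<times> 'd::finite \<Rightarrow> real) \<Rightarrow> nat \<Rightarrow> real^'d \<Rightarrow> real" where
  "row_dot W j x = (\<Sum>i\<in>UNIV. W (j, i) * x $ i)"

definition relu_net :: "real \<Rightarrow> nat \<Rightarrow> (nat \<Rightarrow> real) \<Rightarrow> (nat \<times> 'd::finite \<Rightarrow> real) \<Rightarrow> real^'d \<Rightarrow> real" where
  "relu_net \<rho> m a W x = \<rho> / sqrt (real m) * (\<Sum>j<m. a j * max 0 (row_dot W j x))"

definition grad_net :: "real \<Rightarrow> nat \<Rightarrow> (nat \<Rightarrow> real) \<Rightarrow> (nat \<times> 'd::finite \<Rightarrow> real) \<Rightarrow> real^'d \<Rightarrow> (nat \<times> 'd \<Rightarrow> real)" where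
  "grad_net \<rho> m a W x = (\<lambda>(j, i). if j < m then
      \<rho> / sqrt (real m) * a j * (if row_dot W j x \<ge> 0 then 1 else 0) * x $ i else 0)"

definition logistic_loss :: "real \<Rightarrow> real" where
  "logistic_loss r = ln (1 + exp (- r))"

definition emp_risk :: "real \<Rightarrow> nat \<Rightarrow> (nat \<Rightarrow> real) \<Rightarrow> nat \<Rightarrow> (nat \<Rightarrow> real^'d::finite) \<Rightarrow> (nat \<Rightarrow> real)
    \<Rightarrow> (nat \<times> 'd \<Rightarrow> real) \<Rightarrow> (nat \<times> 'd \<Rightarrow> real) \<Rightarrow> real" where
  "emp_risk \<rho> m a n xs ys V B =
     (1 / real n) * (\<Sum>k<n. logistic_loss (ys k * frob_inner m (grad_net \<rho> m a V (xs k)) B))"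

definition pop_risk :: "real \<Rightarrow> nat \<Rightarrow> (nat \<Rightarrow> real) \<Rightarrow> ((real^'d::finite) \<times> real) measure
    \<Rightarrow> (nat \<times> 'd \<Rightarrow> real) \<Rightarrow> real" where
  "pop_risk \<rho> m a \<mu> V = (\<integral>z. logistic_loss (snd z * relu_net \<rho> m a V (fst z)) \<partial>\<mu>)"

definition pop_risk0 :: "real \<Rightarrow> nat \<Rightarrow> (nat \<Rightarrow> real) \<Rightarrow> (nat \<times> 'd::finite \<Rightarrow> real) \<Rightarrow> ((real^'d) \<times> real) measure
    \<Rightarrow> (nat \<times> 'd \<Rightarrow> real) \<Rightarrow> real" where
  "pop_risk0 \<rho> m a W0 \<mu> V = (\<integral>z. logistic_loss (snd z * frob_inner m (grad_net \<rho> m a W0 (fst z)) V) \<partial>\<mu>)"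

definition init_measure :: "nat \<Rightarrow> ((nat \<Rightarrow> real) \<times> (nat \<times> 'd::finite \<Rightarrow> real)) measure" where
  "init_measure m =
     (PiM {..<m} (\<lambda>_. measure_pmf (pmf_of_set {-1, 1::real})))
     \<Otimes>\<^sub>M (PiM ({..<m} \<times> (UNIV :: 'd set)) (\<lambda>_. std_normal_distribution))"

text \<open>"With probability at least p, P holds": some measurable event of probability at least p
  on which P holds (inner probability; avoids measurability side conditions).\<close>
definition whp :: "'a measure \<Rightarrow> real \<Rightarrow> ('a \<Rightarrow> bool) \<Rightarrow> bool" where
  "whp M p P \<longleftrightarrow> (\<exists>E\<in>sets M. measure M E \<ge> p \<and> (\<forall>\<omega>\<in>E. P \<omega>))"

end

theory Submission
  imports Defs
begin

(* Only the rows j whose activation sign 1[w_j . x >= 0] differs between V and W0 contribute to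
   <grad f(x;V) - grad f(x;W0), B>, each by at most |(v_j - w_j) . x| + |(b_j - w_j) . x|, so by
   Cauchy-Schwarz the inner product is at most rho / sqrt m |x| sqrt(#flips) (R_V + R_B).
   A row flips only if |w_j . x| <= r |x| or |v_j - w_j| > r. The second happens for at most
   R_V^2 / r^2 rows, the first for about m r rows by Gaussian anti-concentration and Hoeffding's
   inequality, and r = R_V^(2/3) m^(-1/3) balances the two. Uniformity in x costs a union bound
   over a grid of mesh 1/(d m) together with Markov's inequality for |w_j|. The risk ratios follow
   from ln (1 + e^-s) <= e^|s - t| ln (1 + e^-t). *)

section \<open>Rows, Frobenius norms and sign flips\<close>

definition mat_row :: "(nat \<times> 'd::finite \<Rightarrow> real) \<Rightarrow> nat \<Rightarrow> real^'d" where
  "mat_row W j = (\<chi> i. W (j, i))"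

lemma row_dot_eq_inner: "row_dot W j x = mat_row W j \<bullet> x"
  by (simp add: row_dot_def mat_row_def inner_vec_def)

lemma mat_row_mat_diff: "mat_row (mat_diff A B) j = mat_row A j - mat_row B j"
  by (simp add: mat_row_def mat_diff_def vec_eq_iff)

lemma row_dot_mat_diff: "row_dot (mat_diff A B) j x = row_dot A j x - row_dot B j x"
  by (simp add: row_dot_eq_inner mat_row_mat_diff inner_diff_left)

lemma norm_mat_row_sq: "(norm (mat_row W j))\<^sup>2 = (\<Sum>i\<in>UNIV. (W (j, i))\<^sup>2)"
  by (simp add: norm_vec_def L2_set_def mat_row_def sum_nonneg)

lemma frob_norm_eq_L2_set_rows: "frob_norm m A = L2_set (\<lambda>j. norm (mat_row A j)) {..<m}"
  unfolding frob_norm_def frob_inner_def L2_set_def norm_mat_row_sq by (simp add: power2_eq_square)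

lemma frob_norm_nonneg: "0 \<le> frob_norm m A"
  by (simp add: frob_norm_eq_L2_set_rows L2_set_nonneg)

lemma power2_frob_norm: "(frob_norm m A)\<^sup>2 = (\<Sum>j<m. (norm (mat_row A j))\<^sup>2)"
  by (simp add: frob_norm_eq_L2_set_rows L2_set_def sum_nonneg)

lemma sum_norm_rows_le_frob_norm:
  assumes "S \<subseteq> {..<m}"
  shows "(\<Sum>j\<in>S. norm (mat_row A j)) \<le> sqrt (card S) * frob_norm m A"
proof -
  have "(\<Sum>j\<in>S. norm (mat_row A j)) \<le> L2_set (\<lambda>_. 1) S * L2_set (\<lambda>j. norm (mat_row A j)) S"
    using L2_set_mult_ineq[of "\<lambda>_. 1" "\<lambda>j. norm (mat_row A j)" S] by simp
  also have "L2_set (\<lambda>_. 1) S = sqrt (card S)"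
    by (simp add: L2_set_def)
  also have "L2_set (\<lambda>j. norm (mat_row A j)) S \<le> frob_norm m A"
    unfolding frob_norm_eq_L2_set_rows using assms
    by (auto simp: L2_set_def intro!: real_sqrt_le_mono sum_mono2)
  finally show ?thesis
    by (simp add: mult_left_mono)
qed

lemma frob_inner_mat_diff_left:
  "frob_inner m (mat_diff A C) B = frob_inner m A B - frob_inner m C B"
  by (simp add: frob_inner_def mat_diff_def left_diff_distrib sum_subtractf)

lemma frob_inner_grad_net:
  "frob_inner m (grad_net \<rho> m a V x) B
     = \<rho> / sqrt m * (\<Sum>j<m. a j * of_bool (0 \<le> row_dot V j x) * row_dot B j x)"
  unfolding frob_inner_def sum_distrib_left
  by (intro sum.cong refl) (simp add: grad_net_def row_dot_def sum_distrib_left sum_divide_distrib mult_ac)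

lemma grad_net_at_zero: "grad_net \<rho> m a V 0 = (\<lambda>_. 0)"
  by (auto simp: grad_net_def)

lemma relu_net_eq_frob_inner_grad_net: "relu_net \<rho> m a V x = frob_inner m (grad_net \<rho> m a V x) V"
  unfolding relu_net_def frob_inner_grad_net
  by (intro arg_cong[where f = "\<lambda>s. \<rho> / sqrt m * s"] sum.cong) (auto simp: max_def)

definition sign_flips ::
    "nat \<Rightarrow> (nat \<times> 'd::finite \<Rightarrow> real) \<Rightarrow> (nat \<times> 'd \<Rightarrow> real) \<Rightarrow> real^'d \<Rightarrow> nat set" where
  "sign_flips m V W x = {j. j < m \<and> (0 \<le> row_dot V j x) \<noteq> (0 \<le> row_dot W j x)}"

lemma sign_change_abs_le:
  fixes a b :: real
  assumes "(0 \<le> a) \<noteq> (0 \<le> b)"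
  shows "\<bar>b\<bar> \<le> \<bar>a - b\<bar>"
  using assms by auto

lemma abs_frob_inner_grad_net_diff_le:
  assumes a: "\<forall>j<m. \<bar>a j\<bar> \<le> 1" and \<rho>: "0 \<le> \<rho>"
  shows "\<bar>frob_inner m (mat_diff (grad_net \<rho> m a V x) (grad_net \<rho> m a W x)) B\<bar>
     \<le> \<rho> / sqrt m * norm x * sqrt (card (sign_flips m V W x))
        * (frob_norm m (mat_diff V W) + frob_norm m (mat_diff B W))"
proof -
  let ?S = "sign_flips m V W x"
  let ?DV = "\<lambda>j. norm (mat_row (mat_diff V W) j)" and ?DB = "\<lambda>j. norm (mat_row (mat_diff B W) j)"
  define t where
    "t j = a j * (of_bool (0 \<le> row_dot V j x) - of_bool (0 \<le> row_dot W j x)) * row_dot B j x" for j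
  have "frob_inner m (mat_diff (grad_net \<rho> m a V x) (grad_net \<rho> m a W x)) B
      = \<rho> / sqrt m * (\<Sum>j<m. t j)"
    by (simp add: frob_inner_mat_diff_left frob_inner_grad_net t_def sum_subtractf ring_distribs)
  also have "(\<Sum>j<m. t j) = (\<Sum>j\<in>?S. t j)"
    by (rule sum.mono_neutral_right) (auto simp: t_def sign_flips_def)
  finally have eq: "frob_inner m (mat_diff (grad_net \<rho> m a V x) (grad_net \<rho> m a W x)) B
      = \<rho> / sqrt m * (\<Sum>j\<in>?S. t j)" .
  have t: "\<bar>t j\<bar> \<le> norm x * ?DV j + norm x * ?DB j" if "j \<in> ?S" for j
  proof -
    from that have "j < m" and flip: "(0 \<le> row_dot V j x) \<noteq> (0 \<le> row_dot W j x)"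
      by (auto simp: sign_flips_def)
    then have "\<bar>t j\<bar> \<le> \<bar>row_dot W j x + row_dot (mat_diff B W) j x\<bar>"
      using a by (auto simp: t_def abs_mult row_dot_mat_diff intro: mult_left_le_one_le)
    also have "\<dots> \<le> \<bar>row_dot (mat_diff V W) j x\<bar> + \<bar>row_dot (mat_diff B W) j x\<bar>"
      using sign_change_abs_le[OF flip] by (simp add: row_dot_mat_diff)
    also have "\<dots> \<le> norm x * ?DV j + norm x * ?DB j"
      unfolding row_dot_eq_inner mult.commute[of "norm x"] by (intro add_mono Cauchy_Schwarz_ineq2)
    finally show ?thesis .
  qed
  have "\<bar>\<Sum>j\<in>?S. t j\<bar> \<le> (\<Sum>j\<in>?S. norm x * ?DV j + norm x * ?DB j)"
    using t by (intro order.trans[OF sum_abs sum_mono])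
  also have "\<dots> = norm x * ((\<Sum>j\<in>?S. ?DV j) + (\<Sum>j\<in>?S. ?DB j))"
    by (simp add: sum.distrib sum_distrib_left distrib_left)
  also have "\<dots> \<le> norm x * (sqrt (card ?S) * frob_norm m (mat_diff V W)
                            + sqrt (card ?S) * frob_norm m (mat_diff B W))"
    by (intro mult_left_mono add_mono sum_norm_rows_le_frob_norm) (auto simp: sign_flips_def)
  finally have "\<rho> / sqrt m * \<bar>\<Sum>j\<in>?S. t j\<bar> \<le> \<rho> / sqrt m * (norm x * (sqrt (card ?S)
      * frob_norm m (mat_diff V W) + sqrt (card ?S) * frob_norm m (mat_diff B W)))"
    using \<rho> by (intro mult_left_mono) auto
  then show ?thesis
    using \<rho> by (simp add: eq abs_mult algebra_simps add_divide_distrib)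
qed

(* A flipped row with |w_j . x| > r |x| has |(v_j - w_j) . x| > r |x|, hence |v_j - w_j| > r;
   at most |V - W|^2 / r^2 rows can do that. *)
lemma card_sign_flips_le:
  assumes r: "0 < r"
  shows "card (sign_flips m V W x)
     \<le> card {j. j < m \<and> \<bar>row_dot W j x\<bar> \<le> r * norm x} + (frob_norm m (mat_diff V W))\<^sup>2 / r\<^sup>2"
proof -
  let ?D = "\<lambda>j. norm (mat_row (mat_diff V W) j)"
  define S1 where "S1 = {j. j < m \<and> \<bar>row_dot W j x\<bar> \<le> r * norm x}"
  define S2 where "S2 = {j \<in> sign_flips m V W x. r * norm x < \<bar>row_dot W j x\<bar>}"
  have S2: "S2 \<subseteq> {..<m}"
    by (auto simp: S2_def sign_flips_def)
  have "card (sign_flips m V W x) \<le> card (S1 \<union> S2)"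
    using S2 by (intro card_mono) (auto simp: S1_def S2_def sign_flips_def intro: finite_subset)
  also have "\<dots> \<le> card S1 + card S2"
    by (rule card_Un_le)
  finally have card_le: "real (card (sign_flips m V W x)) \<le> card S1 + card S2"
    by linarith
  have "r < ?D j" if "j \<in> S2" for j
  proof -
    from that have flip: "(0 \<le> row_dot V j x) \<noteq> (0 \<le> row_dot W j x)"
      and far: "r * norm x < \<bar>row_dot W j x\<bar>"
      by (auto simp: S2_def sign_flips_def)
    have "r * norm x < \<bar>row_dot (mat_diff V W) j x\<bar>"
      using sign_change_abs_le[OF flip] far by (simp add: row_dot_mat_diff)
    also have "\<dots> \<le> ?D j * norm x"
      by (simp add: row_dot_eq_inner Cauchy_Schwarz_ineq2)
    finally show ?thesis
      by (rule mult_right_less_imp_less) simp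
  qed
  then have "card S2 * r\<^sup>2 \<le> (\<Sum>j\<in>S2. (?D j)\<^sup>2)"
    using r by (simp add: sum_bounded_below[where K = "r\<^sup>2", simplified] power_strict_mono less_imp_le)
  also have "\<dots> \<le> (\<Sum>j<m. (?D j)\<^sup>2)"
    using S2 by (intro sum_mono2) auto
  finally have "card S2 \<le> (frob_norm m (mat_diff V W))\<^sup>2 / r\<^sup>2"
    using r by (simp add: power2_frob_norm pos_le_divide_eq)
  with card_le show ?thesis
    by (simp add: S1_def)
qed

lemma abs_frob_inner_grad_net_diff_le_margin:
  assumes a: "\<forall>j<m. \<bar>a j\<bar> \<le> 1" and \<rho>: "0 \<le> \<rho>" and r: "0 < r"
    and V: "frob_norm m (mat_diff V W) \<le> R_V" and B: "frob_norm m (mat_diff B W) \<le> R_B"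
  shows "\<bar>frob_inner m (mat_diff (grad_net \<rho> m a V x) (grad_net \<rho> m a W x)) B\<bar>
     \<le> \<rho> / sqrt m * norm x * sqrt (card {j. j < m \<and> \<bar>row_dot W j x\<bar> \<le> r * norm x} + R_V\<^sup>2 / r\<^sup>2)
        * (R_V + R_B)"
proof -
  have "card (sign_flips m V W x)
      \<le> card {j. j < m \<and> \<bar>row_dot W j x\<bar> \<le> r * norm x} + (frob_norm m (mat_diff V W))\<^sup>2 / r\<^sup>2"
    by (rule card_sign_flips_le[OF r])
  also have "(frob_norm m (mat_diff V W))\<^sup>2 / r\<^sup>2 \<le> R_V\<^sup>2 / r\<^sup>2"
    using V frob_norm_nonneg by (intro divide_right_mono power_mono) auto
  finally have "sqrt (card (sign_flips m V W x))
      \<le> sqrt (card {j. j < m \<and> \<bar>row_dot W j x\<bar> \<le> r * norm x} + R_V\<^sup>2 / r\<^sup>2)"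
    by simp
  moreover have "frob_norm m (mat_diff V W) + frob_norm m (mat_diff B W) \<le> R_V + R_B"
    using V B by simp
  ultimately show ?thesis
    using abs_frob_inner_grad_net_diff_le[OF a \<rho>, of V x W B] \<rho>
    by (elim order.trans) (intro mult_mono mult_left_mono; simp add: frob_norm_nonneg add_nonneg_nonneg)
qed

section \<open>Events of high probability\<close>

lemma whp_mono:
  assumes "whp M p P" "q \<le> p" "\<And>\<omega>. \<omega> \<in> space M \<Longrightarrow> P \<omega> \<Longrightarrow> Q \<omega>"
  shows "whp M q Q"
proof -
  from assms(1) obtain E where "E \<in> sets M" "p \<le> measure M E" "\<forall>\<omega>\<in>E. P \<omega>"
    unfolding whp_def by blast
  with assms(2,3) show ?thesis
    unfolding whp_def by (intro bexI[of _ E]) (auto dest: sets.sets_into_space)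
qed

lemma whp_space:
  assumes "prob_space M" "p \<le> 1" "\<And>\<omega>. \<omega> \<in> space M \<Longrightarrow> P \<omega>"
  shows "whp M p P"
  using assms unfolding whp_def by (intro bexI[of _ "space M"]) (auto simp: prob_space.prob_space)

lemma whp_Ball:
  fixes \<delta> :: real
  assumes "prob_space M" "finite I" "\<And>i. i \<in> I \<Longrightarrow> whp M (1 - \<delta>) (P i)"
  shows "whp M (1 - real (card I) * \<delta>) (\<lambda>\<omega>. \<forall>i\<in>I. P i \<omega>)"
proof -
  interpret prob_space M by fact
  from assms(3) have "\<forall>i\<in>I. \<exists>E. E \<in> events \<and> 1 - \<delta> \<le> prob E \<and> (\<forall>\<omega>\<in>E. P i \<omega>)"
    unfolding whp_def by blast
  from bchoice[OF this] obtain E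
    where E: "\<forall>i\<in>I. E i \<in> events \<and> 1 - \<delta> \<le> prob (E i) \<and> (\<forall>\<omega>\<in>E i. P i \<omega>)"
    by blast
  let ?F = "\<Union>i\<in>I. space M - E i"
  have F: "?F \<in> events"
    using E \<open>finite I\<close> by (intro sets.finite_UN) auto
  have "prob ?F \<le> (\<Sum>i\<in>I. prob (space M - E i))"
    using E \<open>finite I\<close> by (intro finite_measure_subadditive_finite) auto
  also have "\<dots> = (\<Sum>i\<in>I. 1 - prob (E i))"
    using E by (intro sum.cong refl prob_compl) auto
  also have "\<dots> \<le> (\<Sum>i\<in>I. \<delta>)"
    using E by (intro sum_mono) auto
  finally have "1 - card I * \<delta> \<le> prob (space M - ?F)"
    using prob_compl[OF F] by simp
  then show ?thesis
    unfolding whp_def using E F by (intro bexI[of _ "space M - ?F"]) auto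
qed

lemma (in prob_space) whp_card_le_Hoeffding:
  fixes m :: nat and p \<delta> :: real
  assumes indep: "indep_vars (\<lambda>_. N) X {..<m}" and Q: "Q \<in> sets N"
    and p: "\<And>j. j < m \<Longrightarrow> prob {\<omega> \<in> space M. X j \<omega> \<in> Q} \<le> p"
    and \<delta>: "0 < \<delta>" "\<delta> \<le> 1"
  shows "whp M (1 - \<delta>) (\<lambda>\<omega>. card {j. j < m \<and> X j \<omega> \<in> Q} \<le> m * p + sqrt (m * ln (1 / \<delta>) / 2))"
proof (cases "m = 0")
  case True
  then show ?thesis
    using \<delta> by (intro whp_space) (auto simp: prob_space_axioms)
next
  case False
  define Y where "Y j \<omega> = (indicator Q (X j \<omega>) :: real)" for j \<omega>
  have Y_indep: "indep_vars (\<lambda>_. borel) Y {..<m}"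
    unfolding Y_def using Q by (intro indep_vars_compose2[OF indep]) simp
  interpret H: Hoeffding_ineq M "{..<m}" Y "\<lambda>_. 0" "\<lambda>_. 1" "\<Sum>j<m. expectation (Y j)"
    using Y_indep by unfold_locales (auto simp: Y_def)
  define \<epsilon> where "\<epsilon> = sqrt (m * ln (1 / \<delta>) / 2)"
  have ln: "0 \<le> ln (1 / \<delta>)"
    using \<delta> by simp
  then have \<epsilon>2: "\<epsilon>\<^sup>2 = m * ln (1 / \<delta>) / 2"
    by (simp add: \<epsilon>_def)
  define F where "F = {\<omega> \<in> space M. (\<Sum>j<m. expectation (Y j)) + \<epsilon> \<le> (\<Sum>j<m. Y j \<omega>)}"
  have F: "F \<in> events"
    unfolding F_def using Y_indep by (measurable; simp add: indep_vars_def)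
  have "prob F \<le> exp (- 2 * \<epsilon>\<^sup>2 / (\<Sum>j<m. (1 - 0)\<^sup>2))"
    unfolding F_def using False ln by (intro H.Hoeffding_ineq_ge) (auto simp: \<epsilon>_def)
  also have "\<dots> = \<delta>"
    using False \<delta> by (simp add: \<epsilon>2 ln_div)
  finally have "1 - \<delta> \<le> prob (space M - F)"
    using prob_compl[OF F] by simp
  moreover have "expectation (Y j) = prob {\<omega> \<in> space M. X j \<omega> \<in> Q}" for j
    unfolding Y_def[abs_def] by (simp add: indicator_vimage[symmetric] vimage_def Int_def conj_commute)
  then have "expectation (Y j) \<le> p" if "j < m" for j
    using p[OF that] by simp
  then have "(\<Sum>j<m. expectation (Y j)) \<le> m * p"
    using sum_mono[of "{..<m}" "\<lambda>j. expectation (Y j)" "\<lambda>_. p"] by simp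
  moreover have "(\<Sum>j<m. Y j \<omega>) = card {j. j < m \<and> X j \<omega> \<in> Q}" for \<omega>
    by (simp add: Y_def indicator_def of_bool_def[symmetric] sum.inter_filter[symmetric]
        Collect_conj_eq lessThan_def)
  ultimately have "card {j. j < m \<and> X j \<omega> \<in> Q} \<le> m * p + \<epsilon>" if "\<omega> \<in> space M - F" for \<omega>
    using that unfolding F_def by fastforce
  with \<open>1 - \<delta> \<le> prob (space M - F)\<close> F show ?thesis
    unfolding whp_def \<epsilon>_def by (intro bexI[of _ "space M - F"]) auto
qed

section \<open>Gaussian weight matrices\<close>

lemma indep_vars_PiM_components:
  assumes "\<And>i. i \<in> I \<Longrightarrow> prob_space (M i)"
  shows "prob_space.indep_vars (PiM I M) M (\<lambda>i \<omega>. \<omega> i) I"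
proof -
  interpret prob_space "PiM I M"
    using assms by (rule prob_space_PiM)
  show ?thesis
  proof (cases "I = {}")
    case True
    show ?thesis
      unfolding indep_vars_def indep_sets_def using True by simp
  next
    case False
    have "distr (PiM I M) (PiM I M) (\<lambda>\<omega>. \<lambda>i\<in>I. \<omega> i) = distr (PiM I M) (PiM I M) (\<lambda>\<omega>. \<omega>)"
      by (rule distr_cong) (auto simp: space_PiM)
    also have "\<dots> = PiM I (\<lambda>i. distr (PiM I M) (M i) (\<lambda>\<omega>. \<omega> i))"
      using assms by (simp add: distr_PiM_component cong: PiM_cong)
    finally show ?thesis
      using False by (subst indep_vars_iff_distr_eq_PiM') auto
  qed
qed

lemma borel_measurable_vec_lambda:
  fixes f :: "'a \<Rightarrow> real^'d::finite"
  assumes "\<And>i. (\<lambda>x. f x $ i) \<in> borel_measurable M"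
  shows "f \<in> borel_measurable M"
  by (subst borel_measurable_euclidean_space) (auto simp: Basis_vec_def inner_axis assms)

lemma emeasure_normal_density_interval_le:
  assumes \<sigma>: "0 < \<sigma>" and t: "0 \<le> t"
  shows "emeasure (density lborel (normal_density 0 \<sigma>)) {-t..t} \<le> t / \<sigma>"
proof -
  let ?c = "1 / sqrt (2 * pi * \<sigma>\<^sup>2)"
  have "emeasure (density lborel (normal_density 0 \<sigma>)) {-t..t}
      = (\<integral>\<^sup>+ x. ennreal (normal_density 0 \<sigma> x) * indicator {-t..t} x \<partial>lborel)"
    by (rule emeasure_density) auto
  also have "\<dots> \<le> (\<integral>\<^sup>+ x. ennreal ?c * indicator {-t..t} x \<partial>lborel)"
    unfolding normal_density_def
    by (intro nn_integral_mono mult_right_mono ennreal_leI mult_left_le) auto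
  also have "\<dots> = ennreal ?c * emeasure lborel {-t..t}"
    by (rule nn_integral_cmult_indicator) simp
  also have "\<dots> = ennreal (?c * (2 * t))"
    using t by (subst ennreal_mult) auto
  also have "?c * (2 * t) \<le> t / \<sigma>"
  proof -
    have "2 \<le> sqrt (2 * pi)"
      using pi_gt3 real_sqrt_le_mono[of 4 "2 * pi"] by simp
    then show ?thesis
      using \<sigma> t by (simp add: real_sqrt_mult field_simps mult_left_mono)
  qed
  finally show ?thesis
    by (simp add: ennreal_leI)
qed

abbreviation sign_vectors :: "nat \<Rightarrow> (nat \<Rightarrow> real) measure" where
  "sign_vectors m \<equiv> PiM {..<m} (\<lambda>_. measure_pmf (pmf_of_set {-1, 1}))"

abbreviation gaussian_matrix :: "nat \<Rightarrow> (nat \<times> 'd::finite \<Rightarrow> real) measure" where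
  "gaussian_matrix m \<equiv> PiM ({..<m} \<times> UNIV) (\<lambda>_. std_normal_distribution)"

lemma prob_space_gaussian_matrix: "prob_space (gaussian_matrix m)"
  by (intro prob_space_PiM prob_space_normal_density) auto

lemma whp_init_measureI:
  fixes P :: "(nat \<Rightarrow> real) \<Rightarrow> (nat \<times> 'd::finite \<Rightarrow> real) \<Rightarrow> bool"
  assumes "whp (gaussian_matrix m) p (\<lambda>W. \<forall>a. (\<forall>j<m. \<bar>a j\<bar> \<le> 1) \<longrightarrow> P a W)"
  shows "whp (init_measure m) p (\<lambda>(a, W). P a W)"
proof -
  interpret G: prob_space "gaussian_matrix m :: (nat \<times> 'd \<Rightarrow> real) measure"
    by (rule prob_space_gaussian_matrix)
  interpret A: product_prob_space "\<lambda>_. measure_pmf (pmf_of_set {-1, 1::real})" "{..<m}"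
    by (intro product_prob_spaceI) (simp add: measure_pmf.prob_space_axioms)
  from assms obtain E where E: "E \<in> sets (gaussian_matrix m)" "p \<le> measure (gaussian_matrix m) E"
    and P: "\<And>W a. W \<in> E \<Longrightarrow> \<forall>j<m. \<bar>a j\<bar> \<le> 1 \<Longrightarrow> P a W"
    unfolding whp_def by blast
  define S where "S = Pi\<^sub>E {..<m} (\<lambda>_. {-1, 1::real})"
  have S: "S \<in> sets (sign_vectors m)"
    unfolding S_def by (intro sets_PiM_I_finite) auto
  have "emeasure (sign_vectors m) S = (\<Prod>j<m. emeasure (measure_pmf (pmf_of_set {-1, 1::real})) {-1, 1})"
    unfolding S_def by (rule A.emeasure_PiM) auto
  also have "\<dots> = 1"
    by (simp add: measure_pmf.emeasure_eq_measure measure_pmf_of_set)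
  finally have "emeasure (init_measure m) (S \<times> E) = emeasure (gaussian_matrix m) E"
    unfolding init_measure_def by (simp add: G.emeasure_pair_measure_Times[OF S E(1)])
  then have "measure (init_measure m) (S \<times> E) = measure (gaussian_matrix m) E"
    by (simp add: measure_def)
  moreover have "S \<times> E \<in> sets (init_measure m)"
    unfolding init_measure_def using S E(1) by simp
  moreover have "P a W" if "(a, W) \<in> S \<times> E" for a W
  proof (rule P)
    show "W \<in> E"
      using that by simp
    from that have "a \<in> S"
      by simp
    then have "a j \<in> {-1, 1}" if "j < m" for j
      unfolding S_def by (rule PiE_mem) (use that in simp)
    then show "\<forall>j<m. \<bar>a j\<bar> \<le> 1"
      by fastforce
  qed
  ultimately show ?thesis
    unfolding whp_def using E(2) by (intro bexI[of _ "S \<times> E"]) auto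
qed

lemma sets_gaussian_matrix:
  "sets (gaussian_matrix m) = sets (PiM ({..<m} \<times> UNIV) (\<lambda>_. borel))"
  by (intro sets_PiM_cong) simp_all

lemma measurable_gaussian_matrix_entry[measurable]:
  "k \<in> {..<m} \<times> UNIV \<Longrightarrow> (\<lambda>W. W k) \<in> borel_measurable (gaussian_matrix m)"
  by (subst measurable_cong_sets[OF sets_gaussian_matrix refl]) simp

lemma distr_gaussian_matrix_entry:
  fixes k :: "nat \<times> 'd::finite"
  assumes "k \<in> {..<m} \<times> UNIV"
  shows "distr (gaussian_matrix m) borel (\<lambda>W. W k) = std_normal_distribution"
proof -
  have "distr (gaussian_matrix m) borel (\<lambda>W. W k) = distr (gaussian_matrix m) std_normal_distribution (\<lambda>W. W k)"
    by (rule distr_cong) simp_all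
  also have "\<dots> = std_normal_distribution"
    using assms by (intro distr_PiM_component prob_space_normal_density) auto
  finally show ?thesis .
qed

lemma distributed_gaussian_matrix_entry:
  fixes k :: "nat \<times> 'd::finite"
  assumes "k \<in> {..<m} \<times> UNIV"
  shows "distributed (gaussian_matrix m) lborel (\<lambda>W. W k) (normal_density 0 1)"
proof -
  have "distr (gaussian_matrix m) lborel (\<lambda>W. W k) = distr (gaussian_matrix m) borel (\<lambda>W. W k)"
    by (rule distr_cong) simp_all
  then show ?thesis
    using assms by (simp add: distributed_def distr_gaussian_matrix_entry)
qed

lemma indep_vars_gaussian_matrix_entries:
  "prob_space.indep_vars (gaussian_matrix m :: (nat \<times> 'd::finite \<Rightarrow> real) measure)
     (\<lambda>_. borel) (\<lambda>k W. W k) ({..<m} \<times> UNIV)"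
proof -
  interpret prob_space "gaussian_matrix m :: (nat \<times> 'd \<Rightarrow> real) measure"
    by (rule prob_space_gaussian_matrix)
  have "measurable N std_normal_distribution = measurable N borel" for N :: "'a measure"
    by (rule measurable_cong_sets) simp_all
  moreover have "indep_vars (\<lambda>_. std_normal_distribution) (\<lambda>k W. W k) ({..<m} \<times> (UNIV :: 'd set))"
    by (intro indep_vars_PiM_components prob_space_normal_density) simp
  ultimately show ?thesis
    unfolding indep_vars_def by simp
qed

lemma measurable_gaussian_matrix_row[measurable]:
  "j < m \<Longrightarrow> (\<lambda>W. mat_row W j) \<in> borel_measurable (gaussian_matrix m)"
  by (rule borel_measurable_vec_lambda) (simp add: mat_row_def)

lemma indep_vars_gaussian_matrix_rows:
  "prob_space.indep_vars (gaussian_matrix m :: (nat \<times> 'd::finite \<Rightarrow> real) measure)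
     (\<lambda>_. borel) (\<lambda>j W. mat_row W j) {..<m}"
proof -
  interpret prob_space "gaussian_matrix m :: (nat \<times> 'd \<Rightarrow> real) measure"
    by (rule prob_space_gaussian_matrix)
  define K where "K j = {j} \<times> (UNIV :: 'd set)" for j :: nat
  have "indep_vars (\<lambda>j. PiM (K j) (\<lambda>_. borel)) (\<lambda>j W. restrict W (K j)) {..<m}"
    by (rule indep_vars_restrict[OF indep_vars_gaussian_matrix_entries])
       (auto simp: K_def disjoint_family_on_def)
  moreover have "(\<lambda>w. (\<chi> i. w (j, i)) :: real^'d) \<in> borel_measurable (PiM (K j) (\<lambda>_. borel))" for j
    by (rule borel_measurable_vec_lambda) (simp add: K_def)
  ultimately have "indep_vars (\<lambda>_. borel) (\<lambda>j W. \<chi> i. restrict W (K j) (j, i)) {..<m}"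
    by (rule indep_vars_compose2)
  then show ?thesis
    by (simp add: mat_row_def K_def)
qed

lemma distributed_inner_gaussian_matrix_row:
  fixes y :: "real^'d::finite"
  assumes j: "j < m" and y: "y \<noteq> 0"
  shows "distributed (gaussian_matrix m) lborel (\<lambda>W. mat_row W j \<bullet> y) (normal_density 0 (norm y))"
proof -
  interpret prob_space "gaussian_matrix m :: (nat \<times> 'd \<Rightarrow> real) measure"
    by (rule prob_space_gaussian_matrix)
  define I where "I = {i. y $ i \<noteq> 0}"
  define K where "K = Pair j ` I"
  have K: "finite K" "K \<noteq> {}" "K \<subseteq> {..<m} \<times> UNIV"
    using y j by (auto simp: K_def I_def vec_eq_iff)
  have row: "mat_row W j \<bullet> y = (\<Sum>k\<in>K. y $ snd k * W k)" for W :: "nat \<times> 'd \<Rightarrow> real"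
  proof -
    have "mat_row W j \<bullet> y = (\<Sum>i\<in>UNIV. y $ i * W (j, i))"
      by (simp add: inner_vec_def mat_row_def mult.commute)
    also have "\<dots> = (\<Sum>i\<in>I. y $ i * W (j, i))"
      by (rule sum.mono_neutral_right) (auto simp: I_def)
    finally show ?thesis
      by (simp add: K_def sum.reindex inj_on_def)
  qed
  have norm_y: "sqrt (\<Sum>k\<in>K. \<bar>y $ snd k\<bar>\<^sup>2) = norm y"
  proof -
    have "(\<Sum>k\<in>K. \<bar>y $ snd k\<bar>\<^sup>2) = (\<Sum>i\<in>I. (y $ i)\<^sup>2)"
      by (simp add: K_def sum.reindex inj_on_def)
    also have "\<dots> = (\<Sum>i\<in>UNIV. (y $ i)\<^sup>2)"
      by (rule sum.mono_neutral_left) (auto simp: I_def)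
    finally show ?thesis
      by (simp add: norm_vec_def L2_set_def)
  qed
  have indep: "indep_vars (\<lambda>_. borel) (\<lambda>k W. y $ snd k * W k) K"
    by (rule indep_vars_compose2[where Y = "\<lambda>k v. y $ snd k * v",
          OF indep_vars_subset[OF indep_vars_gaussian_matrix_entries K(3)]]) simp
  have normal: "distributed (gaussian_matrix m) lborel (\<lambda>W. y $ snd k * W k)
      (normal_density 0 \<bar>y $ snd k\<bar>)" if "k \<in> K" for k
    using normal_density_affine[OF distributed_gaussian_matrix_entry[of k m],
        where \<alpha> = "y $ snd k" and \<beta> = 0] that K(3)
    by (auto simp: K_def I_def)
  have "distributed (gaussian_matrix m) lborel (\<lambda>W. \<Sum>k\<in>K. y $ snd k * W k)
      (normal_density (\<Sum>k\<in>K. 0) (sqrt (\<Sum>k\<in>K. \<bar>y $ snd k\<bar>\<^sup>2)))"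
    by (rule sum_indep_normal[OF K(1,2) indep _ normal]) (auto simp: K_def I_def)
  then show ?thesis
    unfolding norm_y row by simp
qed

lemma prob_abs_inner_gaussian_row_le:
  fixes y :: "real^'d::finite"
  assumes j: "j < m" and y: "y \<noteq> 0" and t: "0 \<le> t"
  shows "measure (gaussian_matrix m) {W \<in> space (gaussian_matrix m). \<bar>mat_row W j \<bullet> y\<bar> \<le> t}
     \<le> t / norm y"
proof -
  interpret prob_space "gaussian_matrix m :: (nat \<times> 'd \<Rightarrow> real) measure"
    by (rule prob_space_gaussian_matrix)
  note normal = distributed_inner_gaussian_matrix_row[OF j y]
  have "{W \<in> space (gaussian_matrix m). \<bar>mat_row W j \<bullet> y\<bar> \<le> t}
      = (\<lambda>W. mat_row W j \<bullet> y) -` {-t..t} \<inter> space (gaussian_matrix m)"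
    by auto
  also have "emeasure (gaussian_matrix m) \<dots> = emeasure (distr (gaussian_matrix m) lborel (\<lambda>W. mat_row W j \<bullet> y)) {-t..t}"
    using normal by (intro emeasure_distr[symmetric]) (auto simp: distributed_def)
  also have "\<dots> = emeasure (density lborel (normal_density 0 (norm y))) {-t..t}"
    using normal by (simp add: distributed_def)
  also have "\<dots> \<le> t / norm y"
    using y t by (intro emeasure_normal_density_interval_le) auto
  finally show ?thesis
    using t by (simp add: emeasure_eq_measure divide_nonneg_nonneg)
qed

lemma prob_norm_gaussian_row_gt_le:
  assumes j: "j < m" and K: "0 < K"
  shows "measure (gaussian_matrix m :: (nat \<times> 'd::finite \<Rightarrow> real) measure)
      {W \<in> space (gaussian_matrix m). K < norm (mat_row W j)} \<le> CARD('d) / K\<^sup>2"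
proof -
  interpret prob_space "gaussian_matrix m :: (nat \<times> 'd \<Rightarrow> real) measure"
    by (rule prob_space_gaussian_matrix)
  have entry: "integrable (gaussian_matrix m) (\<lambda>W. (W (j, i))\<^sup>2)
      \<and> expectation (\<lambda>W. (W (j, i))\<^sup>2) = 1" for i :: 'd
  proof -
    have "(j, i) \<in> {..<m} \<times> UNIV"
      using j by simp
    note distr = distr_gaussian_matrix_entry[OF this]
    have meas: "(\<lambda>W. W (j, i)) \<in> borel_measurable (gaussian_matrix m)"
      using j by simp
    have "integrable std_normal_distribution (\<lambda>x. x\<^sup>2)"
      using integrable_std_normal_distribution_moment[of 2] by simp
    then have "integrable (gaussian_matrix m) (\<lambda>W. (W (j, i))\<^sup>2)"
      using integrable_distr_eq[OF meas, of "\<lambda>x. x\<^sup>2"] distr by simp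
    moreover have "expectation (\<lambda>W. (W (j, i))\<^sup>2) = (\<integral>x. x ^ (2 * 1) \<partial>std_normal_distribution)"
      using integral_distr[OF meas, of "\<lambda>x. x\<^sup>2"] distr by simp
    ultimately show ?thesis
      using std_normal_distribution_even_moments(1)[of 1] by simp
  qed
  let ?u = "\<lambda>W :: nat \<times> 'd \<Rightarrow> real. (norm (mat_row W j))\<^sup>2"
  have u: "integrable (gaussian_matrix m) ?u" "expectation ?u = CARD('d)"
    unfolding norm_mat_row_sq using entry[THEN conjunct1] entry[THEN conjunct2]
    by (auto intro!: Bochner_Integration.integrable_sum simp: Bochner_Integration.integral_sum)
  have "prob {W \<in> space (gaussian_matrix m). K < norm (mat_row W j)}
      \<le> prob {W \<in> space (gaussian_matrix m). K\<^sup>2 \<le> ?u W}"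
    using K j by (intro finite_measure_mono) (auto intro: power_strict_mono less_imp_le)
  also have "\<dots> \<le> expectation ?u / K\<^sup>2"
    using u(1) K by (intro integral_Markov_inequality_measure[where A = "space (gaussian_matrix m)"]) auto
  finally show ?thesis
    by (simp add: u(2))
qed

section \<open>Balancing the margin\<close>

lemma powr_divide_eq_power:
  fixes x :: real
  assumes "0 < x"
  shows "x powr (real k / real n) = (x powr (1 / real n)) ^ k"
  using assms by (simp add: powr_realpow[symmetric] powr_powr)

lemma power_sixths:
  fixes m :: real
  assumes "1 \<le> m"
  shows "1 \<le> m powr (1/6)" "m = (m powr (1/6)) ^ 6" "sqrt m = (m powr (1/6)) ^ 3"
    "m powr (1/3) = (m powr (1/6)) ^ 2"
  using assms powr_divide_eq_power[of m 6 6] powr_divide_eq_power[of m 3 6]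
    powr_divide_eq_power[of m 2 6]
  by (simp_all add: ge_one_powr_ge_zero powr_half_sqrt[symmetric])

lemma power_thirds:
  fixes R :: real
  assumes "1 \<le> R"
  shows "1 \<le> R powr (1/3)" "R = (R powr (1/3)) ^ 3" "R powr (2/3) = (R powr (1/3)) ^ 2"
  using assms powr_divide_eq_power[of R 3 3] powr_divide_eq_power[of R 2 3]
  by (simp_all add: ge_one_powr_ge_zero)

(* The choice of r makes the two contributions m r and R^2 / r^2 to the sign-flip count equal. *)
lemma balanced_margin_terms:
  fixes m R :: real
  assumes "1 \<le> m" "1 \<le> R"
  defines "r \<equiv> R powr (2/3) / m powr (1/3)"
  shows "m * r = (R powr (1/3))\<^sup>2 * (m powr (1/6)) ^ 4" "R\<^sup>2 / r\<^sup>2 = (R powr (1/3))\<^sup>2 * (m powr (1/6)) ^ 4"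
proof -
  obtain u s where u: "1 \<le> u" "m = u ^ 6" "m powr (1/3) = u\<^sup>2" "m powr (1/6) = u"
    and s: "1 \<le> s" "R = s ^ 3" "R powr (2/3) = s\<^sup>2" "R powr (1/3) = s"
    using power_sixths[OF assms(1)] power_thirds[OF assms(2)] by metis
  then have r: "r = s\<^sup>2 / u\<^sup>2"
    by (simp add: r_def)
  show "m * r = (R powr (1/3))\<^sup>2 * (m powr (1/6)) ^ 4" "R\<^sup>2 / r\<^sup>2 = (R powr (1/3))\<^sup>2 * (m powr (1/6)) ^ 4"
    unfolding u(4) s(4) r using u(1) s(1) by (simp_all add: u(2) s(2) field_simps eval_nat_numeral)
qed

lemma le_dominant_monomial:
  fixes u s l :: real
  assumes u: "1 \<le> u" and s: "1 \<le> s" and l: "1 \<le> l"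
  shows "u\<^sup>2 \<le> s\<^sup>2 * u ^ 4 * l\<^sup>2" "u ^ 3 * l\<^sup>2 \<le> s\<^sup>2 * u ^ 4 * l\<^sup>2" "s\<^sup>2 * u ^ 4 \<le> s\<^sup>2 * u ^ 4 * l\<^sup>2"
proof -
  have s2: "1 \<le> s\<^sup>2" and l2: "1 \<le> l\<^sup>2"
    using s l by (simp_all add: one_le_power)
  have u4: "u ^ 4 \<le> s\<^sup>2 * u ^ 4"
    using s2 u by (simp add: mult_le_cancel_right1)
  show top: "s\<^sup>2 * u ^ 4 \<le> s\<^sup>2 * u ^ 4 * l\<^sup>2"
    using l2 u mult_left_mono[of 1 "l\<^sup>2" "s\<^sup>2 * u ^ 4"] by simp
  have "u\<^sup>2 \<le> u ^ 4"
    using u by (intro power_increasing) auto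
  with u4 top show "u\<^sup>2 \<le> s\<^sup>2 * u ^ 4 * l\<^sup>2"
    by linarith
  have "u ^ 3 \<le> u ^ 4"
    using u by (intro power_increasing) auto
  with u4 show "u ^ 3 * l\<^sup>2 \<le> s\<^sup>2 * u ^ 4 * l\<^sup>2"
    by (intro mult_right_mono) auto
qed

lemma sqrt_balanced_margin_le:
  fixes m R L q k c :: real
  assumes m: "1 \<le> m" and R: "1 \<le> R" and L: "1 \<le> L" and q: "0 \<le> q" "q \<le> m * L"
    and kc: "0 \<le> k" "0 \<le> c"
  defines "r \<equiv> R powr (2/3) / m powr (1/3)"
  shows "sqrt (k * (m * r) + c * m powr (1/3) + sqrt q + R\<^sup>2 / r\<^sup>2) / sqrt m
     \<le> sqrt (k + c + 2) * R powr (1/3) * L powr (1/4) / m powr (1/6)"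
proof -
  define u s l where "u = m powr (1/6)" and "s = R powr (1/3)" and "l = L powr (1/4)"
  have u: "1 \<le> u" "m = u ^ 6" "sqrt m = u ^ 3" "m powr (1/3) = u\<^sup>2"
    using power_sixths[OF m] by (simp_all add: u_def)
  have s: "1 \<le> s"
    using power_thirds[OF R] by (simp add: s_def)
  have l: "1 \<le> l" "L = l ^ 4"
    using L powr_divide_eq_power[of L 4 4] by (simp_all add: l_def ge_one_powr_ge_zero)
  define P where "P = s\<^sup>2 * u ^ 4 * l\<^sup>2"
  note dominant = le_dominant_monomial[OF u(1) s l(1), folded P_def]
  have "q \<le> (u ^ 3 * l\<^sup>2)\<^sup>2"
    using q by (simp add: u(2) l(2) power_mult_distrib flip: power_mult)
  then have "sqrt q \<le> u ^ 3 * l\<^sup>2"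
    using u(1) by (intro real_le_lsqrt) auto
  moreover have terms: "m * r = s\<^sup>2 * u ^ 4" "R\<^sup>2 / r\<^sup>2 = s\<^sup>2 * u ^ 4"
    using balanced_margin_terms[OF m R, folded r_def s_def u_def] by simp_all
  moreover have "k * (m * r) \<le> k * P" "c * m powr (1/3) \<le> c * P"
    using kc dominant(1,3) by (simp_all add: terms u(4) mult_left_mono)
  ultimately have "k * (m * r) + c * m powr (1/3) + sqrt q + R\<^sup>2 / r\<^sup>2 \<le> (k + c + 2) * P"
    using dominant(2,3) by (simp add: algebra_simps)
  also have "\<dots> = (sqrt (k + c + 2) * (s * u\<^sup>2 * l))\<^sup>2"
    using kc by (simp add: P_def power_mult_distrib flip: power_mult)
  finally have "sqrt (k * (m * r) + c * m powr (1/3) + sqrt q + R\<^sup>2 / r\<^sup>2)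
      \<le> sqrt (k + c + 2) * (s * u\<^sup>2 * l)"
    using u(1) s l(1) kc by (intro real_le_lsqrt) auto
  then have "sqrt (k * (m * r) + c * m powr (1/3) + sqrt q + R\<^sup>2 / r\<^sup>2) / sqrt m
      \<le> sqrt (k + c + 2) * (s * u\<^sup>2 * l) / u ^ 3"
    unfolding u(3) using u(1) by (intro divide_right_mono) auto
  also have "\<dots> = sqrt (k + c + 2) * s * l / u"
    using u(1) by (simp add: field_simps eval_nat_numeral)
  finally show ?thesis
    by (simp add: u_def s_def l_def)
qed

section \<open>Rows with small margin\<close>

lemma whp_card_small_margin_le:
  fixes x :: "real^'d::finite" and r \<delta> :: real
  assumes x: "x \<noteq> 0" and r: "0 < r" and \<delta>: "0 < \<delta>" "\<delta> \<le> 1"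
  shows "whp (gaussian_matrix m) (1 - \<delta>)
    (\<lambda>W. card {j. j < m \<and> \<bar>row_dot W j x\<bar> \<le> r * norm x} \<le> m * r + sqrt (m * ln (1 / \<delta>) / 2))"
proof -
  interpret prob_space "gaussian_matrix m :: (nat \<times> 'd \<Rightarrow> real) measure"
    by (rule prob_space_gaussian_matrix)
  let ?Q = "{v :: real^'d. \<bar>v \<bullet> x\<bar> \<le> r * norm x}"
  have "closed ?Q"
    by (intro closed_Collect_le continuous_intros)
  moreover have "prob {W \<in> space (gaussian_matrix m). mat_row W j \<in> ?Q} \<le> r" if "j < m" for j
    using prob_abs_inner_gaussian_row_le[OF that x, of "r * norm x"] x r by simp
  ultimately have "whp (gaussian_matrix m) (1 - \<delta>)
      (\<lambda>W. card {j. j < m \<and> mat_row W j \<in> ?Q} \<le> m * r + sqrt (m * ln (1 / \<delta>) / 2))"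
    using \<delta> by (intro whp_card_le_Hoeffding[OF indep_vars_gaussian_matrix_rows]) (auto intro: borel_closed)
  then show ?thesis
    by (simp add: row_dot_eq_inner)
qed

lemma unit_ball_finite_net:
  fixes N :: nat
  assumes N: "0 < N"
  obtains G :: "(real^'d::finite) set"
  where "finite G" "card G \<le> (2 * N + 1) ^ CARD('d)"
    "\<And>x. norm x \<le> 1 \<Longrightarrow> \<exists>g\<in>G. norm (x - g) \<le> sqrt CARD('d) / (2 * N)"
proof -
  let ?P = "Pi\<^sub>E (UNIV :: 'd set) (\<lambda>_. {- int N..int N})"
  define G where "G = (\<lambda>f. \<chi> i. of_int (f i) / N) ` ?P"
  have "finite ?P"
    by (intro finite_PiE) auto
  then have fin: "finite G" and "card G \<le> card ?P"
    unfolding G_def by (auto intro: card_image_le)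
  moreover have "card ?P = (2 * N + 1) ^ CARD('d)"
    by (simp add: card_PiE nat_add_distrib nat_mult_distrib)
  ultimately have card: "card G \<le> (2 * N + 1) ^ CARD('d)"
    by simp
  have net: "\<exists>g\<in>G. norm (x - g) \<le> sqrt CARD('d) / (2 * N)" if x: "norm x \<le> 1" for x :: "real^'d"
  proof
    define f where "f i = round (x $ i * N)" for i
    define g :: "real^'d" where "g = (\<chi> i. of_int (f i) / N)"
    have "- int N \<le> f i \<and> f i \<le> int N" for i
    proof -
      have "\<bar>x $ i * N\<bar> \<le> N"
        using order.trans[OF component_le_norm_cart x] by (simp add: abs_mult mult_left_le_one_le)
      then have "- int N \<le> \<lfloor>x $ i * N\<rfloor>" "\<lceil>x $ i * N\<rceil> \<le> int N"
        by (simp_all add: le_floor_iff ceiling_le_iff abs_le_iff)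
      then show ?thesis
        unfolding f_def using floor_le_round ceiling_ge_round order.trans by metis
    qed
    then show "g \<in> G"
      unfolding G_def g_def by (intro imageI) (simp add: PiE_iff)
    have "((x - g) $ i)\<^sup>2 \<le> (1 / (2 * N))\<^sup>2" for i
    proof -
      have "\<bar>(x - g) $ i\<bar> = \<bar>of_int (f i) - x $ i * N\<bar> / N"
        using N by (simp add: g_def field_simps abs_minus_commute)
      also have "\<dots> \<le> (1/2) / N"
        unfolding f_def by (intro divide_right_mono of_int_round_abs_le) simp
      finally show ?thesis
        using power_mono[of "\<bar>(x - g) $ i\<bar>" "1 / (2 * N)" 2] by simp
    qed
    then have "norm (x - g) \<le> sqrt (\<Sum>i\<in>(UNIV :: 'd set). (1 / (2 * N))\<^sup>2)"
      unfolding norm_vec_def L2_set_def by (intro real_sqrt_le_mono sum_mono) simp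
    also have "\<dots> = sqrt CARD('d) / (2 * N)"
      by (simp add: real_sqrt_mult real_sqrt_divide)
    finally show "norm (x - g) \<le> sqrt CARD('d) / (2 * N)" .
  qed
  from fin card net show ?thesis
    by (rule that)
qed

lemma grid_size_le: "real ((2 * (d * m) + 1) ^ d) \<le> 1 + 3 * (real d ^ 2 * real m) ^ d"
proof (cases "d = 0 \<or> m = 0")
  case True
  then show ?thesis
    by (auto simp: power_0_left)
next
  case False
  have "(3::nat) ^ d \<le> 3 * d ^ d"
  proof (cases "3 \<le> d")
    case True
    then have "(3::nat) ^ d \<le> d ^ d"
      by (intro power_mono) auto
    then show ?thesis
      by simp
  next
    case False
    then have "d = 0 \<or> d = 1 \<or> d = 2"
      by auto
    then show ?thesis
      by auto
  qed
  have "(2 * (d * m) + 1) ^ d \<le> (3 * d * m) ^ d"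
    using False by (intro power_mono) auto
  also have "\<dots> = 3 ^ d * d ^ d * m ^ d"
    by (simp add: power_mult_distrib)
  also have "\<dots> \<le> (3 * d ^ d) * d ^ d * m ^ d"
    using \<open>3 ^ d \<le> 3 * d ^ d\<close> by (intro mult_right_mono) auto
  also have "\<dots> = 3 * (d\<^sup>2 * m) ^ d"
    by (simp add: power_mult_distrib power2_eq_square mult_ac)
  finally have "real ((2 * (d * m) + 1) ^ d) \<le> real (3 * (d\<^sup>2 * m) ^ d)"
    by (rule of_nat_mono)
  then show ?thesis
    by simp
qed

lemma abs_inner_le_of_near_direction:
  fixes w x g :: "'a::real_inner"
  assumes x: "x \<noteq> 0" and w: "\<bar>w \<bullet> x\<bar> \<le> r * norm x" and g: "norm (x /\<^sub>R norm x - g) \<le> \<epsilon>"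
  shows "\<bar>w \<bullet> g\<bar> \<le> r + \<epsilon> * norm w"
proof -
  have "\<bar>w \<bullet> (x /\<^sub>R norm x)\<bar> \<le> r"
    using x w by (simp add: abs_mult field_simps)
  moreover have "\<bar>w \<bullet> (g - x /\<^sub>R norm x)\<bar> \<le> norm w * \<epsilon>"
    using g by (intro order.trans[OF Cauchy_Schwarz_ineq2] mult_left_mono) (auto simp: norm_minus_commute)
  moreover have "w \<bullet> g = w \<bullet> (x /\<^sub>R norm x) + w \<bullet> (g - x /\<^sub>R norm x)"
    by (simp add: inner_diff_right)
  ultimately show ?thesis
    by (simp add: mult.commute)
qed

lemma card_small_margin_le_card_slab:
  fixes x g :: "real^'d::finite"
  assumes "x \<noteq> 0" "norm (x /\<^sub>R norm x - g) \<le> \<epsilon>"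
  shows "card {j. j < m \<and> \<bar>row_dot W j x\<bar> \<le> r * norm x}
    \<le> card {j. j < m \<and> \<bar>mat_row W j \<bullet> g\<bar> \<le> r + \<epsilon> * norm (mat_row W j)}"
  using abs_inner_le_of_near_direction[OF assms(1) _ assms(2)]
  by (intro card_mono) (auto simp: row_dot_eq_inner)

lemma prob_gaussian_row_in_slab_le:
  fixes g :: "real^'d::finite"
  assumes j: "j < m" and g: "1/2 \<le> norm g" and r: "0 \<le> r" and \<epsilon>: "0 \<le> \<epsilon>" and K: "0 < K"
  shows "measure (gaussian_matrix m)
      {W \<in> space (gaussian_matrix m). \<bar>mat_row W j \<bullet> g\<bar> \<le> r + \<epsilon> * norm (mat_row W j)}
    \<le> 2 * (r + \<epsilon> * K) + CARD('d) / K\<^sup>2"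
proof -
  interpret prob_space "gaussian_matrix m :: (nat \<times> 'd \<Rightarrow> real) measure"
    by (rule prob_space_gaussian_matrix)
  let ?A = "{W \<in> space (gaussian_matrix m). \<bar>mat_row W j \<bullet> g\<bar> \<le> r + \<epsilon> * K}"
  let ?B = "{W \<in> space (gaussian_matrix m). K < norm (mat_row W j)}"
  have "{W \<in> space (gaussian_matrix m). \<bar>mat_row W j \<bullet> g\<bar> \<le> r + \<epsilon> * norm (mat_row W j)}
      \<subseteq> ?A \<union> ?B"
  proof safe
    fix W :: "nat \<times> 'd \<Rightarrow> real"
    assume "\<bar>mat_row W j \<bullet> g\<bar> \<le> r + \<epsilon> * norm (mat_row W j)" "\<not> K < norm (mat_row W j)"
    then show "\<bar>mat_row W j \<bullet> g\<bar> \<le> r + \<epsilon> * K"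
      using mult_left_mono[of "norm (mat_row W j)" K \<epsilon>] \<epsilon> by linarith
  qed
  then have "prob {W \<in> space (gaussian_matrix m). \<bar>mat_row W j \<bullet> g\<bar> \<le> r + \<epsilon> * norm (mat_row W j)}
      \<le> prob (?A \<union> ?B)"
    using j by (intro finite_measure_mono) auto
  also have "\<dots> \<le> prob ?A + prob ?B"
    using j by (intro measure_Un_le) auto
  also have "prob ?A \<le> (r + \<epsilon> * K) / norm g"
    using g r \<epsilon> K by (intro prob_abs_inner_gaussian_row_le[OF j]) auto
  also have "\<dots> \<le> (r + \<epsilon> * K) / (1/2)"
    using g r \<epsilon> K by (intro divide_left_mono) auto
  also have "prob ?B \<le> CARD('d) / K\<^sup>2"
    by (rule prob_norm_gaussian_row_gt_le[OF j K])
  finally show ?thesis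
    by simp
qed

lemma whp_card_rows_in_slab_le:
  fixes g :: "real^'d::finite" and r \<epsilon> K \<delta> :: real
  assumes g: "1/2 \<le> norm g" and "0 \<le> r" "0 \<le> \<epsilon>" "0 < K" and \<delta>: "0 < \<delta>" "\<delta> \<le> 1"
  shows "whp (gaussian_matrix m) (1 - \<delta>)
    (\<lambda>W. card {j. j < m \<and> \<bar>mat_row W j \<bullet> g\<bar> \<le> r + \<epsilon> * norm (mat_row W j)}
       \<le> m * (2 * (r + \<epsilon> * K) + CARD('d) / K\<^sup>2) + sqrt (m * ln (1 / \<delta>) / 2))"
proof -
  interpret prob_space "gaussian_matrix m :: (nat \<times> 'd \<Rightarrow> real) measure"
    by (rule prob_space_gaussian_matrix)
  let ?Q = "{v :: real^'d. \<bar>v \<bullet> g\<bar> \<le> r + \<epsilon> * norm v}"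
  have "closed ?Q"
    by (intro closed_Collect_le continuous_intros)
  then have "whp (gaussian_matrix m) (1 - \<delta>) (\<lambda>W. card {j. j < m \<and> mat_row W j \<in> ?Q}
      \<le> m * (2 * (r + \<epsilon> * K) + CARD('d) / K\<^sup>2) + sqrt (m * ln (1 / \<delta>) / 2))"
    using assms prob_gaussian_row_in_slab_le[of _ m g r \<epsilon> K]
    by (intro whp_card_le_Hoeffding[OF indep_vars_gaussian_matrix_rows]) (auto intro: borel_closed)
  then show ?thesis
    by simp
qed

(* epsilon is the mesh of the net of directions and K the cutoff for the row norms |w_j|. *)
lemma slab_parameters:
  fixes d m :: nat and r :: real
  assumes d: "1 \<le> d" and m: "0 < m"
  defines "\<epsilon> \<equiv> sqrt d / (2 * real (d * m))" and "K \<equiv> sqrt d * m powr (1/3)"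
  shows "0 \<le> \<epsilon>" "\<epsilon> \<le> 1/2" "0 < K"
    "m * (2 * (r + \<epsilon> * K) + d / K\<^sup>2) = 2 * (m * r) + 2 * m powr (1/3)"
proof -
  have "sqrt d \<le> d"
    using d real_sqrt_le_mono[of d "d * d"] by simp
  also have "\<dots> \<le> d * m"
    using m by (simp add: mult_le_cancel_left1 Suc_le_eq)
  finally show "0 \<le> \<epsilon>" "\<epsilon> \<le> 1/2"
    using d m by (simp_all add: \<epsilon>_def)
  show "0 < K"
    using d m by (simp add: K_def)
  define t where "t = m powr (1/3)"
  have t: "0 < t" "real m = t ^ 3"
    using m powr_divide_eq_power[of m 3 3] by (simp_all add: t_def)
  show "m * (2 * (r + \<epsilon> * K) + d / K\<^sup>2) = 2 * (m * r) + 2 * m powr (1/3)"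
    unfolding \<epsilon>_def K_def t_def[symmetric] using t d
    by (simp add: field_simps power2_eq_square eval_nat_numeral)
qed

(* A row with small margin for x has margin at most r + epsilon |w_j| in the direction of the
   net point g nearest to x / |x|; a union bound over the net gives uniformity in x. *)
lemma whp_card_small_margin_uniform_le:
  fixes m :: nat and r \<delta> :: real
  assumes m: "0 < m" and r: "0 < r" and \<delta>: "0 < \<delta>" "\<delta> \<le> 1"
  shows "whp (gaussian_matrix m :: (nat \<times> 'd::finite \<Rightarrow> real) measure)
    (1 - (1 + 3 * (real CARD('d) ^ 2 * real m) ^ CARD('d)) * \<delta>)
    (\<lambda>W. \<forall>x :: real^'d. x \<noteq> 0 \<longrightarrow> card {j. j < m \<and> \<bar>row_dot W j x\<bar> \<le> r * norm x}
       \<le> 2 * (m * r) + 2 * m powr (1/3) + sqrt (m * ln (1 / \<delta>) / 2))"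
proof -
  define d where "d = CARD('d)"
  define \<epsilon> where "\<epsilon> = sqrt d / (2 * real (d * m))"
  define K where "K = sqrt d * m powr (1/3)"
  have "1 \<le> d"
    by (simp add: d_def Suc_le_eq)
  note par = slab_parameters[OF this m, folded \<epsilon>_def K_def]
  obtain G :: "(real^'d) set" where G: "finite G" "card G \<le> (2 * (d * m) + 1) ^ d"
    and net: "\<And>x. norm x \<le> 1 \<Longrightarrow> \<exists>g\<in>G. norm (x - g) \<le> \<epsilon>"
    using unit_ball_finite_net[of "d * m"] \<open>1 \<le> d\<close> m unfolding d_def \<epsilon>_def by auto
  let ?slab = "\<lambda>g W. {j. j < m \<and> \<bar>mat_row W j \<bullet> g\<bar> \<le> r + \<epsilon> * norm (mat_row W j)}"
  let ?bound = "2 * (m * r) + 2 * m powr (1/3) + sqrt (m * ln (1 / \<delta>) / 2)"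
  have "whp (gaussian_matrix m) (1 - \<delta>) (\<lambda>W. 1/2 \<le> norm g \<longrightarrow> card (?slab g W) \<le> ?bound)"
    for g :: "real^'d"
  proof (cases "1/2 \<le> norm g")
    case True
    with r par \<delta> have "whp (gaussian_matrix m) (1 - \<delta>)
        (\<lambda>W. card (?slab g W) \<le> m * (2 * (r + \<epsilon> * K) + CARD('d) / K\<^sup>2) + sqrt (m * ln (1 / \<delta>) / 2))"
      by (intro whp_card_rows_in_slab_le) auto
    then show ?thesis
      unfolding par(4)[of r, unfolded d_def] by (rule whp_mono) auto
  qed (use \<delta> in \<open>auto intro: whp_space[OF prob_space_gaussian_matrix]\<close>)
  then have "whp (gaussian_matrix m) (1 - card G * \<delta>)
      (\<lambda>W. \<forall>g\<in>G. 1/2 \<le> norm g \<longrightarrow> card (?slab g W) \<le> ?bound)"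
    by (intro whp_Ball[OF prob_space_gaussian_matrix G(1)])
  then show ?thesis
  proof (rule whp_mono)
    show "1 - (1 + 3 * (real CARD('d) ^ 2 * real m) ^ CARD('d)) * \<delta> \<le> 1 - card G * \<delta>"
      using G(2) grid_size_le[of d m] \<delta> unfolding d_def
      by (intro diff_left_mono mult_right_mono) linarith+
    fix W :: "nat \<times> 'd \<Rightarrow> real"
    assume W: "\<forall>g\<in>G. 1/2 \<le> norm g \<longrightarrow> card (?slab g W) \<le> ?bound"
    show "\<forall>x. x \<noteq> 0 \<longrightarrow> card {j. j < m \<and> \<bar>row_dot W j x\<bar> \<le> r * norm x} \<le> ?bound"
    proof (intro allI impI)
      fix x :: "real^'d"
      assume "x \<noteq> 0"
      obtain g where "g \<in> G" and g: "norm (x /\<^sub>R norm x - g) \<le> \<epsilon>"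
        using net[of "x /\<^sub>R norm x"] \<open>x \<noteq> 0\<close> by auto
      have "1 = norm (x /\<^sub>R norm x)"
        using \<open>x \<noteq> 0\<close> by simp
      also have "\<dots> \<le> norm g + \<epsilon>"
        using norm_triangle_sub[of "x /\<^sub>R norm x" g] g by simp
      finally have "1/2 \<le> norm g"
        using par(2) by simp
      then show "card {j. j < m \<and> \<bar>row_dot W j x\<bar> \<le> r * norm x} \<le> ?bound"
        using W \<open>g \<in> G\<close> card_small_margin_le_card_slab[OF \<open>x \<noteq> 0\<close> g, of m W r]
        by fastforce
    qed
  qed
qed

section \<open>Logistic loss and risk ratios\<close>

lemma ln_one_plus_mult_le:
  fixes c u :: real
  assumes c: "1 \<le> c" and u: "0 \<le> u"
  shows "ln (1 + c * u) \<le> c * ln (1 + u)"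
proof -
  have t: "0 \<le> 1 / c" "1 / c \<le> 1"
    using c by auto
  have "(1 - 1 / c) * ln 1 + (1 / c) * ln (1 + c * u) \<le> ln ((1 - 1 / c) *\<^sub>R 1 + (1 / c) *\<^sub>R (1 + c * u))"
    using c u by (intro concave_onD[OF ln_concave t]) (auto simp: add_pos_nonneg)
  also have "(1 - 1 / c) *\<^sub>R 1 + (1 / c) *\<^sub>R (1 + c * u) = 1 + u"
    using c by (simp add: field_simps)
  finally show ?thesis
    using c by (simp add: divide_le_eq mult.commute)
qed

lemma logistic_loss_pos: "0 < logistic_loss s"
  unfolding logistic_loss_def by (intro ln_gt_zero) simp

lemma logistic_loss_le_exp_abs_diff: "logistic_loss s \<le> exp \<bar>s - t\<bar> * logistic_loss t"
proof -
  have "exp (- s) = exp (t - s) * exp (- t)"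
    by (simp flip: exp_add)
  also have "\<dots> \<le> exp \<bar>s - t\<bar> * exp (- t)"
    by (intro mult_right_mono) auto
  finally have "ln (1 + exp (- s)) \<le> ln (1 + exp \<bar>s - t\<bar> * exp (- t))"
    by (simp add: add_pos_pos)
  also have "\<dots> \<le> exp \<bar>s - t\<bar> * ln (1 + exp (- t))"
    by (rule ln_one_plus_mult_le) auto
  finally show ?thesis
    by (simp add: logistic_loss_def)
qed

lemma logistic_loss_le_exp_mult:
  assumes "y \<in> {-1, 1}" "\<bar>s - t\<bar> \<le> \<tau>"
  shows "logistic_loss (y * s) \<le> exp \<tau> * logistic_loss (y * t)"
proof -
  have "\<bar>y * s - y * t\<bar> \<le> \<tau>"
    using assms by (auto simp: right_diff_distrib[symmetric] abs_mult)
  then show ?thesis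
    by (intro order.trans[OF logistic_loss_le_exp_abs_diff[of "y * s" "y * t"]] mult_right_mono)
      (auto intro: less_imp_le logistic_loss_pos)
qed

lemma emp_risk_div_le:
  assumes ys: "\<forall>k<n. ys k \<in> {-1, 1}"
    and diff: "\<And>k. k < n \<Longrightarrow> \<bar>frob_inner m (grad_net \<rho> m a V1 (xs k)) B
                               - frob_inner m (grad_net \<rho> m a V2 (xs k)) B\<bar> \<le> \<tau>"
  shows "emp_risk \<rho> m a n xs ys V1 B / emp_risk \<rho> m a n xs ys V2 B \<le> exp \<tau>"
proof (cases "n = 0")
  case True
  then show ?thesis
    by (simp add: emp_risk_def)
next
  case False
  define loss where "loss V k = logistic_loss (ys k * frob_inner m (grad_net \<rho> m a V (xs k)) B)" for V k
  have "(\<Sum>k<n. loss V1 k) \<le> (\<Sum>k<n. exp \<tau> * loss V2 k)"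
    using ys diff unfolding loss_def by (intro sum_mono logistic_loss_le_exp_mult) auto
  moreover have "0 < (\<Sum>k<n. loss V2 k)"
    using False by (intro sum_pos) (auto simp: loss_def logistic_loss_pos)
  ultimately have "(\<Sum>k<n. loss V1 k) / (\<Sum>k<n. loss V2 k) \<le> exp \<tau>"
    by (simp add: divide_le_eq sum_distrib_left)
  then show ?thesis
    using False by (simp add: emp_risk_def loss_def)
qed

lemma pop_risk_div_le:
  fixes \<mu> :: "((real^'d::finite) \<times> real) measure"
  assumes AE: "AE z in \<mu>. norm (fst z) \<le> 1 \<and> snd z \<in> {-1, 1}"
    and diff: "\<And>x. norm x \<le> 1 \<Longrightarrow>
      \<bar>frob_inner m (mat_diff (grad_net \<rho> m a V x) (grad_net \<rho> m a W x)) V\<bar> \<le> \<tau>"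
  shows "pop_risk \<rho> m a \<mu> V / pop_risk0 \<rho> m a W \<mu> V \<le> exp \<tau>"
proof -
  define f where "f z = logistic_loss (snd z * relu_net \<rho> m a V (fst z))" for z :: "(real^'d) \<times> real"
  define g where "g z = logistic_loss (snd z * frob_inner m (grad_net \<rho> m a W (fst z)) V)"
    for z :: "(real^'d) \<times> real"
  have fg: "AE z in \<mu>. f z \<le> exp \<tau> * g z"
    using AE
  proof (rule AE_mp, intro AE_I2 impI)
    fix z :: "(real^'d) \<times> real"
    assume "norm (fst z) \<le> 1 \<and> snd z \<in> {-1, 1}"
    then show "f z \<le> exp \<tau> * g z"
      unfolding f_def g_def relu_net_eq_frob_inner_grad_net
      using diff by (intro logistic_loss_le_exp_mult) (auto simp: frob_inner_mat_diff_left)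
  qed
  show ?thesis
  proof (cases "integrable \<mu> f \<and> integrable \<mu> g \<and> integral\<^sup>L \<mu> g \<noteq> 0")
    case True
    have "0 \<le> integral\<^sup>L \<mu> g"
      by (intro integral_nonneg_AE) (simp add: g_def less_imp_le[OF logistic_loss_pos])
    moreover have "integral\<^sup>L \<mu> f \<le> integral\<^sup>L \<mu> (\<lambda>z. exp \<tau> * g z)"
      using True fg by (intro integral_mono_AE) auto
    ultimately show ?thesis
      using True by (simp add: pop_risk_def pop_risk0_def f_def[symmetric] g_def[symmetric]
          divide_le_eq)
  next
    case False
    then have "integral\<^sup>L \<mu> f = 0 \<or> integral\<^sup>L \<mu> g = 0"
      using not_integrable_integral_eq by blast
    then show ?thesis
      by (auto simp: pop_risk_def pop_risk0_def f_def[symmetric] g_def[symmetric])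
  qed
qed

lemma abs_frob_inner_grad_net_diff_le_of_margin_count:
  fixes x :: "real^'d::finite" and m :: nat and \<delta> \<rho> R_V R_B r :: real
  assumes m: "0 < m" and \<delta>: "0 < \<delta>" "\<delta> \<le> 1" and R_V: "1 \<le> R_V" and R_B: "0 \<le> R_B"
    and \<rho>: "0 \<le> \<rho>" and a: "\<forall>j<m. \<bar>a j\<bar> \<le> 1"
    and V: "frob_norm m (mat_diff V W) \<le> R_V" and B: "frob_norm m (mat_diff B W) \<le> R_B"
  defines "r \<equiv> R_V powr (2/3) / m powr (1/3)"
  assumes N: "card {j. j < m \<and> \<bar>row_dot W j x\<bar> \<le> r * norm x} \<le> m * r + sqrt (m * ln (1 / \<delta>) / 2)"
  shows "\<bar>frob_inner m (mat_diff (grad_net \<rho> m a V x) (grad_net \<rho> m a W x)) B\<bar>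
    \<le> 3 * \<rho> * norm x * (R_B + 2 * R_V) * R_V powr (1/3) * ln (exp 1 / \<delta>) powr (1/4) / m powr (1/6)"
proof -
  let ?N = "card {j. j < m \<and> \<bar>row_dot W j x\<bar> \<le> r * norm x}"
  let ?L = "ln (exp 1 / \<delta>)"
  have "ln \<delta> \<le> 0" "?L = 1 - ln \<delta>" "ln (1 / \<delta>) = - ln \<delta>"
    using \<delta> by (simp_all add: ln_div)
  then have L: "1 \<le> ?L" "ln (1 / \<delta>) / 2 \<le> ?L"
    by linarith+
  then have "m * ln (1 / \<delta>) / 2 \<le> m * ?L"
    using mult_left_mono[of "ln (1 / \<delta>) / 2" ?L m] by simp
  have "0 < r"
    using R_V m by (simp add: r_def)
  then have "\<bar>frob_inner m (mat_diff (grad_net \<rho> m a V x) (grad_net \<rho> m a W x)) B\<bar>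
      \<le> \<rho> / sqrt m * norm x * sqrt (?N + R_V\<^sup>2 / r\<^sup>2) * (R_V + R_B)"
    by (rule abs_frob_inner_grad_net_diff_le_margin[OF a \<rho> _ V B])
  also have "\<dots> = \<rho> * norm x * (R_V + R_B) * (sqrt (?N + R_V\<^sup>2 / r\<^sup>2) / sqrt m)"
    by (simp add: field_simps)
  also have "\<dots> \<le> \<rho> * norm x * (R_V + R_B)
      * (sqrt (1 * (m * r) + 0 * m powr (1/3) + sqrt (m * ln (1 / \<delta>) / 2) + R_V\<^sup>2 / r\<^sup>2) / sqrt m)"
    using N \<rho> R_V R_B by (intro mult_left_mono divide_right_mono) auto
  also have "\<dots> \<le> \<rho> * norm x * (R_V + R_B)
      * (sqrt (1 + 0 + 2) * R_V powr (1/3) * ?L powr (1/4) / m powr (1/6))"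
    using m R_V \<delta> L \<rho> R_B unfolding r_def
    by (intro mult_left_mono sqrt_balanced_margin_le) auto
  also have "\<dots> \<le> 3 * \<rho> * norm x * (R_B + 2 * R_V) * R_V powr (1/3) * ?L powr (1/4) / m powr (1/6)"
  proof -
    have "sqrt 3 * (R_V + R_B) \<le> 3 * (R_B + 2 * R_V)"
      using R_V R_B real_sqrt_le_mono[of 3 9] by (intro mult_mono) auto
    then have "(\<rho> * norm x * R_V powr (1/3) * ?L powr (1/4) / m powr (1/6)) * (sqrt 3 * (R_V + R_B))
        \<le> (\<rho> * norm x * R_V powr (1/3) * ?L powr (1/4) / m powr (1/6)) * (3 * (R_B + 2 * R_V))"
      using \<rho> by (intro mult_left_mono) auto
    then show ?thesis
      by (simp add: times_divide_eq_left times_divide_eq_right mult_ac)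
  qed
  finally show ?thesis .
qed

lemma whp_abs_frob_inner_grad_net_diff_le:
  fixes x :: "real^'d::finite" and m :: nat and \<delta> \<rho> R_V R_B :: real
  assumes m: "0 < m" and \<delta>: "0 < \<delta>" "\<delta> \<le> 1" and R_V: "1 \<le> R_V" and R_B: "0 \<le> R_B"
    and \<rho>: "0 \<le> \<rho>"
  shows "whp (gaussian_matrix m) (1 - \<delta>) (\<lambda>W. \<forall>a. (\<forall>j<m. \<bar>a j\<bar> \<le> 1) \<longrightarrow>
    (\<forall>V B. frob_norm m (mat_diff V W) \<le> R_V \<longrightarrow> frob_norm m (mat_diff B W) \<le> R_B \<longrightarrow>
       \<bar>frob_inner m (mat_diff (grad_net \<rho> m a V x) (grad_net \<rho> m a W x)) B\<bar>
         \<le> 3 * \<rho> * norm x * (R_B + 2 * R_V) * R_V powr (1/3) * ln (exp 1 / \<delta>) powr (1/4)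
             / real m powr (1/6)))"
proof (cases "x = 0")
  case True
  then show ?thesis
    using \<delta> by (intro whp_space[OF prob_space_gaussian_matrix])
      (auto simp: grad_net_at_zero mat_diff_def frob_inner_def)
next
  case False
  have "0 < R_V powr (2/3) / m powr (1/3)"
    using R_V m by simp
  from whp_card_small_margin_le[OF False this \<delta>] show ?thesis
    by (rule whp_mono[OF _ order_refl])
      (blast intro: abs_frob_inner_grad_net_diff_le_of_margin_count[OF m \<delta> R_V R_B \<rho>])
qed

lemma whp_emp_risk_div_le:
  fixes xs :: "nat \<Rightarrow> real^'d::finite" and m n :: nat and \<delta> \<rho> R_V R_B :: real
  assumes m: "0 < m" and \<delta>: "0 < \<delta>" "\<delta> \<le> 1" and R_V: "1 \<le> R_V" and R_B: "0 \<le> R_B"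
    and \<rho>: "0 \<le> \<rho>" and data: "\<forall>k<n. norm (xs k) \<le> 1 \<and> ys k \<in> {-1, 1}"
  defines "\<tau> \<equiv> 3 * \<rho> * (R_B + 2 * R_V) * R_V powr (1/3) * ln (exp 1 / \<delta>) powr (1/4) / real m powr (1/6)"
  shows "whp (gaussian_matrix m) (1 - n * \<delta>) (\<lambda>W. \<forall>a. (\<forall>j<m. \<bar>a j\<bar> \<le> 1) \<longrightarrow>
    (\<forall>V1 V2 B. frob_norm m (mat_diff V1 W) \<le> R_V \<longrightarrow> frob_norm m (mat_diff V2 W) \<le> R_V
       \<longrightarrow> frob_norm m (mat_diff B W) \<le> R_B \<longrightarrow>
       emp_risk \<rho> m a n xs ys V1 B / emp_risk \<rho> m a n xs ys V2 B \<le> exp (2 * \<tau>)))"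
proof -
  let ?bound = "\<lambda>k W. \<forall>a. (\<forall>j<m. \<bar>a j\<bar> \<le> 1) \<longrightarrow>
    (\<forall>V B. frob_norm m (mat_diff V W) \<le> R_V \<longrightarrow> frob_norm m (mat_diff B W) \<le> R_B \<longrightarrow>
       \<bar>frob_inner m (mat_diff (grad_net \<rho> m a V (xs k)) (grad_net \<rho> m a W (xs k))) B\<bar> \<le> \<tau>)"
  have "whp (gaussian_matrix m) (1 - \<delta>) (?bound k)" if "k < n" for k
  proof -
    have "3 * \<rho> * norm (xs k) * (R_B + 2 * R_V) * R_V powr (1/3) * ln (exp 1 / \<delta>) powr (1/4)
        / real m powr (1/6) = norm (xs k) * \<tau>"
      unfolding \<tau>_def by (simp only: times_divide_eq_right mult_ac)
    also have "\<dots> \<le> \<tau>"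
      using data that \<rho> R_V R_B \<delta> by (intro mult_left_le_one_le) (auto simp: \<tau>_def)
    finally have le: "3 * \<rho> * norm (xs k) * (R_B + 2 * R_V) * R_V powr (1/3) * ln (exp 1 / \<delta>) powr (1/4)
        / real m powr (1/6) \<le> \<tau>" .
    from whp_abs_frob_inner_grad_net_diff_le[OF m \<delta> R_V R_B \<rho>, of "xs k"] show ?thesis
      by (rule whp_mono) (fastforce intro: order.trans[OF _ le])+
  qed
  then have "whp (gaussian_matrix m) (1 - card {..<n} * \<delta>) (\<lambda>W. \<forall>k\<in>{..<n}. ?bound k W)"
    by (intro whp_Ball[OF prob_space_gaussian_matrix]) auto
  then show ?thesis
  proof (rule whp_mono, simp, intro allI impI)
    fix W V1 V2 B :: "nat \<times> 'd \<Rightarrow> real" and a :: "nat \<Rightarrow> real"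
    assume "\<forall>k\<in>{..<n}. ?bound k W" and "\<forall>j<m. \<bar>a j\<bar> \<le> 1" and "frob_norm m (mat_diff V1 W) \<le> R_V"
      and "frob_norm m (mat_diff V2 W) \<le> R_V" and "frob_norm m (mat_diff B W) \<le> R_B"
    then have bounds: "\<bar>frob_inner m (mat_diff (grad_net \<rho> m a V1 (xs k)) (grad_net \<rho> m a W (xs k))) B\<bar> \<le> \<tau>"
      "\<bar>frob_inner m (mat_diff (grad_net \<rho> m a V2 (xs k)) (grad_net \<rho> m a W (xs k))) B\<bar> \<le> \<tau>"
      if "k < n" for k
      using that by auto
    show "emp_risk \<rho> m a n xs ys V1 B / emp_risk \<rho> m a n xs ys V2 B \<le> exp (2 * \<tau>)"
    proof (rule emp_risk_div_le)
      show "\<forall>k<n. ys k \<in> {-1, 1}"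
        using data by blast
      fix k
      assume "k < n"
      from bounds[OF this] show "\<bar>frob_inner m (grad_net \<rho> m a V1 (xs k)) B
          - frob_inner m (grad_net \<rho> m a V2 (xs k)) B\<bar> \<le> 2 * \<tau>"
        by (auto simp: frob_inner_mat_diff_left abs_le_iff)
    qed
  qed
qed

lemma abs_frob_inner_grad_net_diff_self_le_of_margin_count:
  fixes x :: "real^'d::finite" and m :: nat and \<delta> \<rho> R_V r :: real
  assumes m: "0 < m" and \<delta>: "0 < \<delta>" "\<delta> \<le> 1" and R_V: "1 \<le> R_V" and \<rho>: "0 \<le> \<rho>"
    and a: "\<forall>j<m. \<bar>a j\<bar> \<le> 1" and V: "frob_norm m (mat_diff V W) \<le> R_V" and x: "norm x \<le> 1"
  defines "r \<equiv> R_V powr (2/3) / m powr (1/3)"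
  assumes N: "x \<noteq> 0 \<Longrightarrow> card {j. j < m \<and> \<bar>row_dot W j x\<bar> \<le> r * norm x}
    \<le> 2 * (m * r) + 2 * m powr (1/3) + sqrt (m * ln (1 / \<delta>) / 2)"
  shows "\<bar>frob_inner m (mat_diff (grad_net \<rho> m a V x) (grad_net \<rho> m a W x)) V\<bar>
    \<le> 25 * \<rho> * R_V powr (4/3) * sqrt (ln (exp 1 * CARD('d) * m / \<delta>)) / m powr (1/6)"
proof -
  define \<Lambda> where "\<Lambda> = ln (exp 1 * CARD('d) * m / \<delta>)"
  have "ln (1 / \<delta>) \<le> \<Lambda> - 1" "0 \<le> ln (1 / \<delta>)"
    using m \<delta> by (simp_all add: \<Lambda>_def ln_mult ln_div)
  moreover from this have \<Lambda>: "1 \<le> \<Lambda>"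
    by linarith
  moreover have "\<Lambda> \<le> \<Lambda>\<^sup>2"
    using \<Lambda> mult_left_mono[of 1 \<Lambda> \<Lambda>] by (simp add: power2_eq_square)
  ultimately have "m * (ln (1 / \<delta>) / 2) \<le> m * \<Lambda>\<^sup>2"
    by (intro mult_left_mono) auto
  then have balanced: "sqrt (2 * (m * r) + 2 * m powr (1/3) + sqrt (m * ln (1 / \<delta>) / 2) + R_V\<^sup>2 / r\<^sup>2)
      / sqrt m \<le> sqrt (2 + 2 + 2) * R_V powr (1/3) * (\<Lambda>\<^sup>2) powr (1/4) / m powr (1/6)"
    unfolding r_def using m R_V \<Lambda> \<delta> by (intro sqrt_balanced_margin_le) (simp_all add: one_le_power)
  have "(\<Lambda>\<^sup>2) powr (1/4) = (\<Lambda> powr 2) powr (1/4)"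
    using \<Lambda> by simp
  also have "\<dots> = sqrt \<Lambda>"
    using \<Lambda> by (simp only: powr_powr) (simp add: powr_half_sqrt)
  finally have \<Lambda>2: "(\<Lambda>\<^sup>2) powr (1/4) = sqrt \<Lambda>" .
  have R_V43: "R_V powr (4/3) = R_V * R_V powr (1/3)"
    using R_V powr_add[of R_V 1 "1/3"] by simp
  have "0 < r"
    using R_V m by (simp add: r_def)
  show ?thesis
  proof (cases "x = 0")
    case True
    then show ?thesis
      using \<rho> \<Lambda> by (simp add: grad_net_at_zero mat_diff_def frob_inner_def flip: \<Lambda>_def)
  next
    case False
    let ?N = "card {j. j < m \<and> \<bar>row_dot W j x\<bar> \<le> r * norm x}"
    have "\<bar>frob_inner m (mat_diff (grad_net \<rho> m a V x) (grad_net \<rho> m a W x)) V\<bar>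
        \<le> \<rho> / sqrt m * norm x * sqrt (?N + R_V\<^sup>2 / r\<^sup>2) * (R_V + R_V)"
      by (rule abs_frob_inner_grad_net_diff_le_margin[OF a \<rho> \<open>0 < r\<close> V V])
    also have "\<dots> = (\<rho> * (R_V + R_V)) * norm x * (sqrt (?N + R_V\<^sup>2 / r\<^sup>2) / sqrt m)"
      by (simp add: field_simps)
    also have "\<dots> \<le> (\<rho> * (R_V + R_V)) * 1
        * (sqrt (2 * (m * r) + 2 * m powr (1/3) + sqrt (m * ln (1 / \<delta>) / 2) + R_V\<^sup>2 / r\<^sup>2) / sqrt m)"
      using N[OF False] x \<rho> R_V by (intro mult_mono divide_right_mono) auto
    also have "\<dots> \<le> (\<rho> * (R_V + R_V)) * 1 * (sqrt 6 * R_V powr (1/3) * sqrt \<Lambda> / m powr (1/6))"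
      using mult_left_mono[OF balanced, of "\<rho> * (R_V + R_V) * 1"] \<rho> R_V by (simp add: \<Lambda>2)
    also have "\<dots> = 2 * sqrt 6 * (\<rho> * R_V powr (4/3) * sqrt \<Lambda> / m powr (1/6))"
      by (simp add: R_V43 algebra_simps)
    also have "\<dots> \<le> 25 * (\<rho> * R_V powr (4/3) * sqrt \<Lambda> / m powr (1/6))"
      using real_sqrt_le_mono[of 6 9] \<rho> \<Lambda> by (intro mult_right_mono) simp_all
    finally show ?thesis
      unfolding \<Lambda>_def by (simp add: mult_ac)
  qed
qed

lemma whp_abs_frob_inner_grad_net_diff_self_le:
  fixes m :: nat and \<delta> \<rho> R_V :: real
  assumes m: "0 < m" and \<delta>: "0 < \<delta>" "\<delta> \<le> 1" and R_V: "1 \<le> R_V" and \<rho>: "0 \<le> \<rho>"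
  shows "whp (gaussian_matrix m :: (nat \<times> 'd::finite \<Rightarrow> real) measure)
    (1 - (1 + 3 * (real CARD('d) ^ 2 * real m) ^ CARD('d)) * \<delta>)
    (\<lambda>W. \<forall>a. (\<forall>j<m. \<bar>a j\<bar> \<le> 1) \<longrightarrow>
      (\<forall>V (x :: real^'d). frob_norm m (mat_diff V W) \<le> R_V \<longrightarrow> norm x \<le> 1 \<longrightarrow>
         \<bar>frob_inner m (mat_diff (grad_net \<rho> m a V x) (grad_net \<rho> m a W x)) V\<bar>
           \<le> 25 * \<rho> * R_V powr (4/3) * sqrt (ln (exp 1 * real CARD('d) * real m / \<delta>))
               / real m powr (1/6)))"
proof -
  have "0 < R_V powr (2/3) / m powr (1/3)"
    using R_V m by simp
  from whp_card_small_margin_uniform_le[OF m this \<delta>] show ?thesis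
    by (rule whp_mono[OF _ order_refl])
      (blast intro: abs_frob_inner_grad_net_diff_self_le_of_margin_count[OF m \<delta> R_V \<rho>])
qed

theorem lemmaA7:
  fixes \<delta> \<rho> R_V R_B :: real and m :: nat
    and \<mu> :: "((real^'d::finite) \<times> real) measure"
  assumes "0 < \<delta>" "\<delta> < 1" "R_V \<ge> 1" "R_B \<ge> 0" "\<rho> > 0" "m > 0"
    and "prob_space \<mu>" "sets \<mu> = sets borel"
    and "AE z in \<mu>. norm (fst z) \<le> 1 \<and> snd z \<in> {-1, 1}"
  shows
   \<comment> \<open>(1)\<close>
   "(\<forall>x :: real^'d. whp (init_measure m :: ((nat \<Rightarrow> real) \<times> (nat \<times> 'd \<Rightarrow> real)) measure) (1 - 3 * \<delta>)
       (\<lambda>(a, W0). \<forall>V B. frob_norm m (mat_diff V W0) \<le> R_V \<longrightarrow> frob_norm m (mat_diff B W0) \<le> R_B \<longrightarrow>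
          \<bar>frob_inner m (mat_diff (grad_net \<rho> m a V x) (grad_net \<rho> m a W0 x)) B\<bar>
            \<le> 3 * \<rho> * norm x * (R_B + 2 * R_V) * R_V powr (1/3) * ln (exp 1 / \<delta>) powr (1/4)
                / real m powr (1/6)))
   \<and>
   \<comment> \<open>(2)\<close>
   (\<forall>(n::nat) (xs :: nat \<Rightarrow> real^'d) (ys :: nat \<Rightarrow> real).
      (\<forall>k<n. norm (xs k) \<le> 1 \<and> ys k \<in> {-1, 1}) \<longrightarrow>
      (let \<tau>\<^sub>1 = 3 * \<rho> * (R_B + 2 * R_V) * R_V powr (1/3) * ln (exp 1 / \<delta>) powr (1/4) / real m powr (1/6)
       in whp (init_measure m :: ((nat \<Rightarrow> real) \<times> (nat \<times> 'd \<Rightarrow> real)) measure) (1 - 3 * real n * \<delta>)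
         (\<lambda>(a, W0). \<forall>V1 V2 B. frob_norm m (mat_diff V1 W0) \<le> R_V \<longrightarrow> frob_norm m (mat_diff V2 W0) \<le> R_V
            \<longrightarrow> frob_norm m (mat_diff B W0) \<le> R_B \<longrightarrow>
            emp_risk \<rho> m a n xs ys V1 B / emp_risk \<rho> m a n xs ys V2 B \<le> exp (2 * \<tau>\<^sub>1))))
   \<and>
   \<comment> \<open>(3) and (4)\<close>
   (real m \<ge> ln (exp 1 * real CARD('d) * real m) \<longrightarrow>
     (let \<tau>\<^sub>3 = 25 * \<rho> * R_V powr (4/3) * sqrt (ln (exp 1 * real CARD('d) * real m / \<delta>)) / real m powr (1/6);
          p = 1 - (1 + 3 * (real CARD('d) ^ 2 * real m) ^ CARD('d)) * \<delta>
      in whp (init_measure m :: ((nat \<Rightarrow> real) \<times> (nat \<times> 'd \<Rightarrow> real)) measure) p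
           (\<lambda>(a, W0). \<forall>V (x :: real^'d). frob_norm m (mat_diff V W0) \<le> R_V \<longrightarrow> norm x \<le> 1 \<longrightarrow>
              \<bar>frob_inner m (mat_diff (grad_net \<rho> m a V x) (grad_net \<rho> m a W0 x)) V\<bar> \<le> \<tau>\<^sub>3)
       \<and> whp (init_measure m :: ((nat \<Rightarrow> real) \<times> (nat \<times> 'd \<Rightarrow> real)) measure) p
           (\<lambda>(a, W0). \<forall>V. frob_norm m (mat_diff V W0) \<le> R_V \<longrightarrow>
              pop_risk \<rho> m a \<mu> V / pop_risk0 \<rho> m a W0 \<mu> V \<le> exp \<tau>\<^sub>3)))"
proof -
  have \<delta>: "0 < \<delta>" "\<delta> \<le> 1" and \<rho>: "0 \<le> \<rho>"
    using assms(1,2,5) by auto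
  note params = assms(6) \<delta> assms(3)
  note uniform = whp_init_measureI[OF whp_abs_frob_inner_grad_net_diff_self_le[OF params \<rho>, where 'd = 'd]]
  show ?thesis
    unfolding Let_def
    apply (intro conjI allI impI)
    subgoal for x
      using whp_init_measureI[OF whp_abs_frob_inner_grad_net_diff_le[OF params assms(4) \<rho>]]
      by (rule whp_mono) (use \<delta> in auto)
    subgoal premises data for n xs ys
      using whp_init_measureI[OF whp_emp_risk_div_le[OF params assms(4) \<rho> data]]
      by (rule whp_mono) (use \<delta> in auto)
    subgoal
      by (rule uniform)
    subgoal
      using uniform by (rule whp_mono) (auto intro: pop_risk_div_le[OF assms(9)])
    done
qed

end
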